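(* In the static load balancing game described in the context, the price of anarchy satisfies $$\mathrm{PoA}\le 1+2\left(\max_{j\in[m]}\frac{s_j^0}{\mu_j}+\frac{\sum_{i=1}^n\lambda_i}{\mu_{\min}}\right)\left(\frac{\sum_{j=1}^m\mu_j}{\sum_{i=1}^n\lambda_i}\right),$$ where $\mu_{\min}=\min_{j}\mu_j$.
   Context: Static load balancing game: there are $m$ servers $[m]$ with service rates $\mu_j>0$ and initial loads $s_j^0\ge 0$, and $n$ players $[n]$; player $i$ holds a job of length $\lambda_i>0$. Player $i$'s action set is $A_i=\{a_i=(a_{i1},\dots,a_{im}):\sum_j a_{ij}=1,\ a_{ij}\ge0\}$. The cost of player $i$ under profile $a$ is $$D_i(a)=\sum_{j=1}^m \lambda_i a_{ij}\left(\frac{\lambda_i a_{ij}}{2\mu_j}+\frac{s_j^0+\sum_{k\neq i}\lambda_k a_{kj}}{\mu_j}\right).$$ A pure Nash equilibrium (NE) is a profile $a$ with $D_i(a_i,a_{-i})\le D_i(a_i',a_{-i})$ for all $i$ and $a_i'\in A_i$. The price of anarchy is $$\mathrm{PoA}=\frac{\max_{a\in \mathrm{NE}}\sum_{i=1}^n D_i(a)}{\min_{a}\sum_{i=1}^n D_i(a)},$$ the maximum being over pure Nash equilibria and the minimum over all action profiles. *)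

theory Defs
  imports Complex_Main
begin

text \<open>Servers are indexed by j < m, players by i < n. A profile is
  a :: nat \<Rightarrow> nat \<Rightarrow> real with a i j the fraction of player i's job sent to server j.\<close>

definition is_action :: "nat \<Rightarrow> (nat \<Rightarrow> real) \<Rightarrow> bool" where
  "is_action m x \<longleftrightarrow> (\<forall>j<m. x j \<ge> 0) \<and> (\<Sum>j<m. x j) = 1"

definition is_profile :: "nat \<Rightarrow> nat \<Rightarrow> (nat \<Rightarrow> nat \<Rightarrow> real) \<Rightarrow> bool" where
  "is_profile n m a \<longleftrightarrow> (\<forall>i<n. is_action m (a i))"

definition cost ::
  "nat \<Rightarrow> nat \<Rightarrow> (nat \<Rightarrow> real) \<Rightarrow> (nat \<Rightarrow> real) \<Rightarrow> (nat \<Rightarrow> real)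
    \<Rightarrow> (nat \<Rightarrow> nat \<Rightarrow> real) \<Rightarrow> nat \<Rightarrow> real" where
  "cost n m mu s0 lam a i =
     (\<Sum>j<m. lam i * a i j * (lam i * a i j / (2 * mu j)
        + (s0 j + (\<Sum>k\<in>{..<n} - {i}. lam k * a k j)) / mu j))"

definition social_cost ::
  "nat \<Rightarrow> nat \<Rightarrow> (nat \<Rightarrow> real) \<Rightarrow> (nat \<Rightarrow> real) \<Rightarrow> (nat \<Rightarrow> real)
    \<Rightarrow> (nat \<Rightarrow> nat \<Rightarrow> real) \<Rightarrow> real" where
  "social_cost n m mu s0 lam a = (\<Sum>i<n. cost n m mu s0 lam a i)"

definition is_NE ::
  "nat \<Rightarrow> nat \<Rightarrow> (nat \<Rightarrow> real) \<Rightarrow> (nat \<Rightarrow> real) \<Rightarrow> (nat \<Rightarrow> real)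
    \<Rightarrow> (nat \<Rightarrow> nat \<Rightarrow> real) \<Rightarrow> bool" where
  "is_NE n m mu s0 lam a \<longleftrightarrow> is_profile n m a \<and>
     (\<forall>i<n. \<forall>x. is_action m x \<longrightarrow>
        cost n m mu s0 lam a i \<le> cost n m mu s0 lam (a(i := x)) i)"

definition PoA ::
  "nat \<Rightarrow> nat \<Rightarrow> (nat \<Rightarrow> real) \<Rightarrow> (nat \<Rightarrow> real) \<Rightarrow> (nat \<Rightarrow> real) \<Rightarrow> real" where
  "PoA n m mu s0 lam =
     (SUP a\<in>{a. is_NE n m mu s0 lam a}. social_cost n m mu s0 lam a)
     / (INF a\<in>{a. is_profile n m a}. social_cost n m mu s0 lam a)"

end

theory Submission
  imports Defs "HOL-Analysis.Analysis"
begin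

text \<open>Write \<open>L\<^sub>j\<close> for the load of server \<open>j\<close>, \<open>\<Lambda> = \<Sum>\<^sub>i \<lambda>\<^sub>i = \<Sum>\<^sub>j L\<^sub>j\<close> and
  \<open>M = \<Sum>\<^sub>j \<mu>\<^sub>j\<close>. Every unit of work on server \<open>j\<close> waits at most
  \<open>(s\<^sup>0\<^sub>j + L\<^sub>j) / \<mu>\<^sub>j \<le> C = max\<^sub>j s\<^sup>0\<^sub>j/\<mu>\<^sub>j + \<Lambda>/\<mu>\<^sub>m\<^sub>i\<^sub>n\<close>, so every profile costs at
  most \<open>\<Lambda> C\<close>. Conversely every profile costs at least \<open>\<Sum>\<^sub>j L\<^sub>j\<^sup>2 / (2 \<mu>\<^sub>j)\<close>, which is at
  least \<open>\<Lambda>\<^sup>2 / (2 M)\<close> by Cauchy-Schwarz. So the ratio of any two social costs is at most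
  \<open>2 C M / \<Lambda>\<close>. Equilibria exist because the game has the exact potential
  \<open>\<Sum>\<^sub>j (s\<^sup>0\<^sub>j L\<^sub>j + L\<^sub>j\<^sup>2/2) / \<mu>\<^sub>j\<close>, and any minimiser of it over
  the compact set of profiles is a Nash equilibrium.\<close>

lemma compact_PiE_UNIV:
  fixes S :: "'a \<Rightarrow> 'b::topological_space set"
  shows "(\<And>i. compact (S i)) \<Longrightarrow> compact (PiE UNIV S)"
  using compactin_PiE[of "\<lambda>_. euclidean" UNIV S] by (simp add: euclidean_product_topology)

lemma sum_squared_div_le_sum_square_div:
  fixes x w :: "'a \<Rightarrow> real"
  assumes "\<And>j. j \<in> A \<Longrightarrow> w j > 0"
  shows "(\<Sum>j\<in>A. x j)\<^sup>2 / (\<Sum>j\<in>A. w j) \<le> (\<Sum>j\<in>A. (x j)\<^sup>2 / w j)"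
proof -
  have "(\<Sum>j\<in>A. x j)\<^sup>2 = (\<Sum>j\<in>A. x j / sqrt (w j) * sqrt (w j))\<^sup>2"
    by (intro arg_cong[where f = "\<lambda>s. s\<^sup>2"] sum.cong) (auto dest!: assms simp: less_imp_neq)
  also have "\<dots> \<le> (\<Sum>j\<in>A. (x j / sqrt (w j))\<^sup>2) * (\<Sum>j\<in>A. (sqrt (w j))\<^sup>2)"
    by (rule Cauchy_Schwarz_ineq_sum)
  also have "\<dots> = (\<Sum>j\<in>A. (x j)\<^sup>2 / w j) * (\<Sum>j\<in>A. w j)"
    using assms by (intro arg_cong2[where f = "(*)"] sum.cong) (auto simp: power_divide less_imp_le)
  finally have CS: "(\<Sum>j\<in>A. x j)\<^sup>2 \<le> (\<Sum>j\<in>A. (x j)\<^sup>2 / w j) * (\<Sum>j\<in>A. w j)" .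
  have "0 \<le> (\<Sum>j\<in>A. w j)" "0 \<le> (\<Sum>j\<in>A. (x j)\<^sup>2 / w j)"
    using assms by (auto intro!: sum_nonneg simp: less_imp_le)
  then show ?thesis
    using CS by (cases "(\<Sum>j\<in>A. w j) = 0") (auto simp: pos_divide_le_eq)
qed

lemma SUP_div_INF_le:
  fixes f g :: "'a \<Rightarrow> real"
  assumes "A \<noteq> {}" "B \<noteq> {}" "\<And>a. a \<in> A \<Longrightarrow> f a \<le> U" "\<And>b. b \<in> B \<Longrightarrow> L \<le> g b"
    and "0 \<le> U" "0 < L"
  shows "(SUP a\<in>A. f a) / (INF b\<in>B. g b) \<le> U / L"
proof -
  have "(SUP a\<in>A. f a) \<le> U" "L \<le> (INF b\<in>B. g b)"
    using assms by (auto intro: cSUP_least cINF_greatest)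
  then show ?thesis
    using assms(5,6) by (meson frac_le order_less_le_trans)
qed

definition server_load :: "nat \<Rightarrow> (nat \<Rightarrow> real) \<Rightarrow> (nat \<Rightarrow> nat \<Rightarrow> real) \<Rightarrow> nat \<Rightarrow> real" where
  "server_load n lam a j = (\<Sum>k<n. lam k * a k j)"

lemma server_load_remove:
  assumes "i < n"
  shows "server_load n lam a j = lam i * a i j + (\<Sum>k\<in>{..<n} - {i}. lam k * a k j)"
  using assms unfolding server_load_def by (simp add: sum.remove)

lemma is_action_le_1:
  assumes "is_action m x" "j < m"
  shows "x j \<le> 1"
proof -
  have "x j \<le> (\<Sum>j<m. x j)"
    using assms unfolding is_action_def by (intro member_le_sum) auto
  then show ?thesis
    using assms(1) unfolding is_action_def by simp
qed

lemma profile_partial_load_nonneg: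
  assumes "is_profile n m a" "\<forall>i<n. lam i \<ge> 0" "j < m" "K \<subseteq> {..<n}"
  shows "0 \<le> (\<Sum>k\<in>K. lam k * a k j)"
  using assms unfolding is_profile_def is_action_def by (intro sum_nonneg) auto

lemma server_load_le_total:
  assumes "is_profile n m a" "\<forall>i<n. lam i \<ge> 0" "j < m"
  shows "server_load n lam a j \<le> (\<Sum>i<n. lam i)"
  unfolding server_load_def
proof (rule sum_mono)
  fix k assume "k \<in> {..<n}"
  then have "is_action m (a k)" "lam k \<ge> 0"
    using assms unfolding is_profile_def by auto
  then show "lam k * a k j \<le> lam k"
    using is_action_le_1[OF _ assms(3)] by (simp add: mult_left_le)
qed

lemma sum_server_load:
  assumes "is_profile n m a"
  shows "(\<Sum>j<m. server_load n lam a j) = (\<Sum>i<n. lam i)"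
proof -
  have "(\<Sum>j<m. server_load n lam a j) = (\<Sum>i<n. lam i * (\<Sum>j<m. a i j))"
    unfolding server_load_def by (simp add: sum.swap[of _ "{..<m}"] sum_distrib_left)
  also have "\<dots> = (\<Sum>i<n. lam i)"
    using assms unfolding is_profile_def is_action_def by simp
  finally show ?thesis .
qed

definition potential ::
  "nat \<Rightarrow> nat \<Rightarrow> (nat \<Rightarrow> real) \<Rightarrow> (nat \<Rightarrow> real) \<Rightarrow> (nat \<Rightarrow> real)
    \<Rightarrow> (nat \<Rightarrow> nat \<Rightarrow> real) \<Rightarrow> real" where
  "potential n m mu s0 lam a =
     (\<Sum>j<m. (s0 j * server_load n lam a j + (server_load n lam a j)\<^sup>2 / 2) / mu j)"

lemma potential_deviation:
  assumes "i < n" "\<forall>j<m. mu j \<noteq> 0"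
  shows "potential n m mu s0 lam (a(i := x)) - potential n m mu s0 lam a
       = cost n m mu s0 lam (a(i := x)) i - cost n m mu s0 lam a i"
proof -
  define others where "others b j = (\<Sum>k\<in>{..<n} - {i}. lam k * b k j)"
    for b :: "nat \<Rightarrow> nat \<Rightarrow> real" and j
  have potential_minus_cost: "potential n m mu s0 lam b - cost n m mu s0 lam b i
      = (\<Sum>j<m. (s0 j * others b j + (others b j)\<^sup>2 / 2) / mu j)" for b
    unfolding potential_def cost_def sum_subtractf[symmetric]
  proof (rule sum.cong[OF refl])
    fix j assume "j \<in> {..<m}"
    then show "(s0 j * server_load n lam b j + (server_load n lam b j)\<^sup>2 / 2) / mu j
        - lam i * b i j * (lam i * b i j / (2 * mu j)
            + (s0 j + (\<Sum>k\<in>{..<n} - {i}. lam k * b k j)) / mu j)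
        = (s0 j * others b j + (others b j)\<^sup>2 / 2) / mu j"
      using assms unfolding server_load_remove[OF assms(1)] others_def
      by (simp add: field_simps power2_eq_square)
  qed
  have "others (a(i := x)) = others a"
    unfolding others_def by (intro ext sum.cong) auto
  then show ?thesis
    using potential_minus_cost[of a] potential_minus_cost[of "a(i := x)"] by simp
qed

lemma potential_minimiser_is_NE:
  assumes "is_profile n m a" "\<forall>j<m. mu j \<noteq> 0"
    and minimal: "\<And>b. is_profile n m b \<Longrightarrow> potential n m mu s0 lam a \<le> potential n m mu s0 lam b"
  shows "is_NE n m mu s0 lam a"
  unfolding is_NE_def
proof (intro conjI allI impI)
  fix i x assume "i < n" "is_action m x"
  then have "is_profile n m (a(i := x))"
    using assms(1) unfolding is_profile_def by simp
  then show "cost n m mu s0 lam a i \<le> cost n m mu s0 lam (a(i := x)) i"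
    using minimal potential_deviation[OF \<open>i < n\<close> assms(2), of s0 lam a x] by fastforce
qed (fact assms(1))

text \<open>Profiles are total functions on \<open>nat\<close>; only those vanishing outside \<open>{..<n} \<times> {..<m}\<close>
  form a compact set, and restricting to it changes neither profilehood nor the potential.\<close>

definition restrict_profile :: "nat \<Rightarrow> nat \<Rightarrow> (nat \<Rightarrow> nat \<Rightarrow> real) \<Rightarrow> nat \<Rightarrow> nat \<Rightarrow> real" where
  "restrict_profile n m a = (\<lambda>i j. if i < n \<and> j < m then a i j else 0)"

lemma is_profile_restrict_profile:
  "is_profile n m a \<Longrightarrow> is_profile n m (restrict_profile n m a)"
  unfolding is_profile_def is_action_def restrict_profile_def by simp

lemma potential_restrict_profile:
  "potential n m mu s0 lam (restrict_profile n m a) = potential n m mu s0 lam a"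
  unfolding potential_def server_load_def restrict_profile_def by simp

lemma continuous_on_profile_entry [continuous_intros]:
  "continuous_on S (\<lambda>a::nat \<Rightarrow> nat \<Rightarrow> real. a i j)"
  by (rule continuous_on_subset[OF continuous_on_product_then_coordinatewise
        [OF continuous_on_product_coordinates]]) auto

lemma continuous_on_potential:
  "\<forall>j<m. mu j \<noteq> 0 \<Longrightarrow> continuous_on S (potential n m mu s0 lam)"
  unfolding potential_def server_load_def by (intro continuous_intros) auto

lemma compact_restricted_profiles:
  "compact {a. is_profile n m a \<and> restrict_profile n m a = a}"
proof -
  let ?box = "PiE UNIV (\<lambda>i. PiE UNIV (\<lambda>j. if i < n \<and> j < m then {0..1} else {0::real}))"
  have "a \<in> ?box \<longleftrightarrow> (\<forall>i j. if i < n \<and> j < m then a i j \<in> {0..1} else a i j = 0)" for a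
    by (simp add: PiE_iff if_distrib)
  then have "{a. is_profile n m a \<and> restrict_profile n m a = a} = ?box \<inter> {a. is_profile n m a}"
    using is_action_le_1
    by (auto simp: is_profile_def is_action_def restrict_profile_def fun_eq_iff)
  moreover have "compact ?box"
    by (intro compact_PiE_UNIV) auto
  moreover have "closed {a::nat \<Rightarrow> nat \<Rightarrow> real. is_profile n m a}"
    unfolding is_profile_def is_action_def
    by (intro closed_Collect_all closed_Collect_imp closed_Collect_conj closed_Collect_le
        closed_Collect_eq open_Collect_const continuous_intros)
  ultimately show ?thesis
    by (simp add: compact_Int_closed)
qed

lemma potential_attains_min:
  assumes "m \<ge> 1" "\<forall>j<m. mu j \<noteq> 0"
  obtains a where "is_profile n m a"
    and "\<And>b. is_profile n m b \<Longrightarrow> potential n m mu s0 lam a \<le> potential n m mu s0 lam b"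
proof -
  let ?K = "{a. is_profile n m a \<and> restrict_profile n m a = a}"
  have "restrict_profile n m (\<lambda>i j. if j = 0 then 1 else 0) \<in> ?K"
    using assms(1) by (simp add: is_profile_def is_action_def restrict_profile_def fun_eq_iff)
  then obtain a where a: "a \<in> ?K"
    and minimal: "\<And>b. b \<in> ?K \<Longrightarrow> potential n m mu s0 lam a \<le> potential n m mu s0 lam b"
    using continuous_attains_inf[OF compact_restricted_profiles _ continuous_on_potential[OF assms(2)]]
    by blast
  have "potential n m mu s0 lam a \<le> potential n m mu s0 lam b" if "is_profile n m b" for b
  proof -
    have "restrict_profile n m b \<in> ?K"
      using that by (simp add: is_profile_restrict_profile) (simp add: restrict_profile_def fun_eq_iff)
    then show ?thesis
      using minimal potential_restrict_profile by metis
  qed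
  with a that show ?thesis by blast
qed

lemma NE_exists:
  assumes "m \<ge> 1" "\<forall>j<m. mu j \<noteq> 0"
  shows "\<exists>a. is_NE n m mu s0 lam a"
  using potential_attains_min[OF assms] potential_minimiser_is_NE[OF _ assms(2)] by metis

lemma cost_le_load_delay:
  assumes "is_profile n m a" "\<forall>i<n. lam i \<ge> 0" "\<forall>j<m. mu j > 0" "i < n"
  shows "cost n m mu s0 lam a i \<le> (\<Sum>j<m. lam i * a i j * ((s0 j + server_load n lam a j) / mu j))"
  unfolding cost_def
proof (rule sum_mono)
  fix j assume "j \<in> {..<m}"
  then have load: "0 \<le> lam i * a i j" and "mu j > 0"
    using assms unfolding is_profile_def is_action_def by auto
  then have "lam i * a i j / (2 * mu j) \<le> lam i * a i j / mu j"
    by (intro divide_left_mono) auto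
  then have "lam i * a i j / (2 * mu j) + (s0 j + (\<Sum>k\<in>{..<n} - {i}. lam k * a k j)) / mu j
      \<le> (s0 j + server_load n lam a j) / mu j"
    unfolding server_load_remove[OF assms(4)] add_divide_distrib by linarith
  from mult_left_mono[OF this load]
  show "lam i * a i j * (lam i * a i j / (2 * mu j)
          + (s0 j + (\<Sum>k\<in>{..<n} - {i}. lam k * a k j)) / mu j)
      \<le> lam i * a i j * ((s0 j + server_load n lam a j) / mu j)" .
qed

lemma social_cost_le:
  assumes "is_profile n m a" "\<forall>i<n. lam i \<ge> 0" "\<forall>j<m. mu j > 0"
  shows "social_cost n m mu s0 lam a \<le>
    (\<Sum>i<n. lam i) * (Max ((\<lambda>j. s0 j / mu j) ` {..<m}) + (\<Sum>i<n. lam i) / Min (mu ` {..<m}))"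
proof -
  define C where "C = Max ((\<lambda>j. s0 j / mu j) ` {..<m}) + (\<Sum>i<n. lam i) / Min (mu ` {..<m})"
  have delay_le: "(s0 j + server_load n lam a j) / mu j \<le> C" if "j < m" for j
  proof -
    have "0 < Min (mu ` {..<m})"
      using assms(3) that by (subst Min_gr_iff) auto
    moreover have "Min (mu ` {..<m}) \<le> mu j"
      using that by (intro Min_le) auto
    moreover have "0 \<le> (\<Sum>i<n. lam i)"
      using assms(2) by (intro sum_nonneg) auto
    ultimately have "server_load n lam a j / mu j \<le> (\<Sum>i<n. lam i) / Min (mu ` {..<m})"
      using server_load_le_total[OF assms(1,2) that]
      by (meson frac_le order.trans)
    moreover have "s0 j / mu j \<le> Max ((\<lambda>j. s0 j / mu j) ` {..<m})"
      using that by (intro Max_ge) auto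
    ultimately show ?thesis
      unfolding C_def add_divide_distrib by linarith
  qed
  have "cost n m mu s0 lam a i \<le> lam i * C" if "i < n" for i
  proof -
    have action: "is_action m (a i)"
      using assms(1) that unfolding is_profile_def by simp
    have "cost n m mu s0 lam a i \<le> (\<Sum>j<m. lam i * a i j * ((s0 j + server_load n lam a j) / mu j))"
      using cost_le_load_delay[OF assms that] .
    also have "\<dots> \<le> (\<Sum>j<m. lam i * a i j * C)"
      using action assms(2) that delay_le unfolding is_action_def
      by (intro sum_mono mult_left_mono) auto
    also have "\<dots> = lam i * C * (\<Sum>j<m. a i j)"
      by (simp add: sum_distrib_left mult_ac)
    also have "\<dots> = lam i * C"
      using action unfolding is_action_def by simp
    finally show ?thesis .
  qed
  then have "social_cost n m mu s0 lam a \<le> (\<Sum>i<n. lam i * C)"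
    unfolding social_cost_def by (intro sum_mono) auto
  then show ?thesis
    unfolding C_def by (simp add: sum_distrib_right)
qed

lemma social_cost_ge_load_squares:
  assumes "is_profile n m a" "\<forall>i<n. lam i \<ge> 0" "\<forall>j<m. mu j > 0" "\<forall>j<m. s0 j \<ge> 0"
  shows "(\<Sum>j<m. (server_load n lam a j)\<^sup>2 / (2 * mu j)) \<le> social_cost n m mu s0 lam a"
proof -
  have cost_ge: "(\<Sum>j<m. lam i * a i j * (server_load n lam a j / (2 * mu j))) \<le> cost n m mu s0 lam a i"
    if "i < n" for i
    unfolding cost_def
  proof (rule sum_mono)
    fix j assume "j \<in> {..<m}"
    then have load: "0 \<le> lam i * a i j" and "mu j > 0" "s0 j \<ge> 0"
      "0 \<le> (\<Sum>k\<in>{..<n} - {i}. lam k * a k j)"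
      using assms that profile_partial_load_nonneg[OF assms(1,2)]
      unfolding is_profile_def is_action_def by auto
    then have "server_load n lam a j / (2 * mu j)
        \<le> lam i * a i j / (2 * mu j) + (s0 j + (\<Sum>k\<in>{..<n} - {i}. lam k * a k j)) / mu j"
      unfolding server_load_remove[OF that] by (simp add: field_simps)
    from mult_left_mono[OF this load]
    show "lam i * a i j * (server_load n lam a j / (2 * mu j))
        \<le> lam i * a i j * (lam i * a i j / (2 * mu j)
            + (s0 j + (\<Sum>k\<in>{..<n} - {i}. lam k * a k j)) / mu j)" .
  qed
  have "(\<Sum>j<m. (server_load n lam a j)\<^sup>2 / (2 * mu j))
      = (\<Sum>i<n. \<Sum>j<m. lam i * a i j * (server_load n lam a j / (2 * mu j)))"
  proof -
    have "(server_load n lam a j)\<^sup>2 / (2 * mu j)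
        = (\<Sum>i<n. lam i * a i j * (server_load n lam a j / (2 * mu j)))" for j
    proof -
      have "(server_load n lam a j)\<^sup>2 / (2 * mu j)
          = server_load n lam a j * (server_load n lam a j / (2 * mu j))"
        by (simp add: power2_eq_square)
      then show ?thesis
        by (simp only: server_load_def[of n lam a j] sum_distrib_right)
    qed
    then show ?thesis
      by (simp add: sum.swap[of _ "{..<n}"])
  qed
  also have "\<dots> \<le> social_cost n m mu s0 lam a"
    unfolding social_cost_def using cost_ge by (intro sum_mono) auto
  finally show ?thesis .
qed

lemma social_cost_ge:
  assumes "is_profile n m a" "\<forall>i<n. lam i \<ge> 0" "\<forall>j<m. mu j > 0" "\<forall>j<m. s0 j \<ge> 0"
  shows "(\<Sum>i<n. lam i)\<^sup>2 / (2 * (\<Sum>j<m. mu j)) \<le> social_cost n m mu s0 lam a"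
proof -
  have "(\<Sum>i<n. lam i)\<^sup>2 / (2 * (\<Sum>j<m. mu j))
      = (\<Sum>j<m. server_load n lam a j)\<^sup>2 / (\<Sum>j<m. mu j) / 2"
    by (simp add: sum_server_load[OF assms(1)])
  also have "\<dots> \<le> (\<Sum>j<m. (server_load n lam a j)\<^sup>2 / mu j) / 2"
    using assms(3) by (intro divide_right_mono sum_squared_div_le_sum_square_div) auto
  also have "\<dots> = (\<Sum>j<m. (server_load n lam a j)\<^sup>2 / (2 * mu j))"
    by (simp add: sum_divide_distrib mult.commute)
  also have "\<dots> \<le> social_cost n m mu s0 lam a"
    by (rule social_cost_ge_load_squares[OF assms])
  finally show ?thesis .
qed

theorem theorem3:
  fixes n m :: nat and mu s0 lam :: "nat \<Rightarrow> real"
  assumes "n \<ge> 1" and "m \<ge> 1"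
    and "\<forall>j<m. mu j > 0" and "\<forall>j<m. s0 j \<ge> 0" and "\<forall>i<n. lam i > 0"
  shows "PoA n m mu s0 lam \<le>
     1 + 2 * (Max ((\<lambda>j. s0 j / mu j) ` {..<m}) + (\<Sum>i<n. lam i) / Min (mu ` {..<m}))
         * ((\<Sum>j<m. mu j) / (\<Sum>i<n. lam i))"
proof -
  define \<Lambda> where "\<Lambda> = (\<Sum>i<n. lam i)"
  define M where "M = (\<Sum>j<m. mu j)"
  define C where "C = Max ((\<lambda>j. s0 j / mu j) ` {..<m}) + \<Lambda> / Min (mu ` {..<m})"
  have lam: "\<forall>i<n. lam i \<ge> 0"
    using assms(5) by (simp add: less_imp_le)
  have "\<Lambda> > 0" "M > 0"
    unfolding \<Lambda>_def M_def using assms by (auto intro!: sum_pos simp: lessThan_empty_iff)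
  then have lower_pos: "\<Lambda>\<^sup>2 / (2 * M) > 0"
    by simp
  \<comment> \<open>\<open>Sup {}\<close> is unspecified on \<open>real\<close>, so the bound needs an equilibrium to exist\<close>
  obtain a where "is_NE n m mu s0 lam a"
    using NE_exists[of m mu n s0 lam] assms(2,3) by fastforce
  then have "is_profile n m a"
    unfolding is_NE_def by simp
  have upper: "social_cost n m mu s0 lam b \<le> \<Lambda> * C" if "is_profile n m b" for b
    using social_cost_le[OF that lam assms(3)] unfolding \<Lambda>_def C_def .
  have lower: "\<Lambda>\<^sup>2 / (2 * M) \<le> social_cost n m mu s0 lam b" if "is_profile n m b" for b
    using social_cost_ge[OF that lam assms(3,4)] unfolding \<Lambda>_def M_def .
  have "PoA n m mu s0 lam \<le> (\<Lambda> * C) / (\<Lambda>\<^sup>2 / (2 * M))"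
    unfolding PoA_def
  proof (rule SUP_div_INF_le)
    show "0 \<le> \<Lambda> * C"
      using lower[OF \<open>is_profile n m a\<close>] upper[OF \<open>is_profile n m a\<close>] lower_pos by linarith
  qed (use \<open>is_NE n m mu s0 lam a\<close> upper lower lower_pos in \<open>auto simp: is_NE_def\<close>)
  also have "\<dots> = 2 * C * (M / \<Lambda>)"
    using \<open>\<Lambda> > 0\<close> by (simp add: field_simps power2_eq_square)
  finally show ?thesis
    unfolding \<Lambda>_def M_def C_def by linarith
qed

end
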